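(* Consider the periodic one-dimensional finite-volume scheme defined in the context, with arbitrary real interface desired velocities $\mathbf{U}^n_i$, and assume that at every time step $n$ the CFL condition $\delta t<\frac12\,\frac{\delta x}{\max_i|\mathbf{U}^n_i|+\max_i|\mathbf{w}^n_i|}$ holds. If $0\le\rho^0_i\le1$ for all $i=1,\dots,N_x$, then $0\le\rho^n_i\le1$ for all $i$ and all $n\ge0$.
   Context: Grid: cells $i=1,\dots,N_x$ of width $\delta x$, indices taken modulo $N_x$ (periodic). Upwind flux: $A^{up}(u,\rho^-,\rho^+)=u\rho^-$ if $u>0$, $=u\rho^+$ if $u\le 0$. Given $\rho^n_i$ and interface velocities $\mathbf{U}^n_i$ (at interface $x_{i-1/2}$), the pressure $(p^n_i)$ is any periodic solution of $\frac{p^n_{i+1}-2p^n_i+p^n_{i-1}}{\delta x^2}=\frac1{\delta x}\big(A^{up}(\mathbf{U}^n_{i+1},\rho^n_i,\rho^n_{i+1})-A^{up}(\mathbf{U}^n_i,\rho^n_{i-1},\rho^n_i)\big)$, the correction velocity is $\mathbf{w}^n_i=-\frac{p^n_i-p^n_{i-1}}{\delta x}$, and the update is $\rho^{n+1}_i=\rho^n_i-\frac{\delta t}{\delta x}\big(A^{up}(\mathbf{U}^n_{i+1},\rho^n_i,\rho^n_{i+1})-A^{up}(\mathbf{U}^n_i,\rho^n_{i-1},\rho^n_i)\big)-\frac{\delta t}{\delta x}\big(A^{up}(\mathbf{w}^n_{i+1},\rho^n_i,\rho^n_{i+1})-A^{up}(\mathbf{w}^n_i,\rho^n_{i-1},\rho^n_i)\big)$.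 *)

theory Defs
  imports Complex_Main
begin

definition Aup :: "real \<Rightarrow> real \<Rightarrow> real \<Rightarrow> real" where
  "Aup u rm rp = (if u > 0 then u * rm else u * rp)"

definition periodic :: "nat \<Rightarrow> (int \<Rightarrow> real) \<Rightarrow> bool" where
  "periodic N f \<longleftrightarrow> (\<forall>i. f (i + int N) = f i)"

text \<open>Upwind flux difference at cell i for interface velocity field v (v i lives at x_{i-1/2}).\<close>
definition flux_diff :: "(int \<Rightarrow> real) \<Rightarrow> (int \<Rightarrow> real) \<Rightarrow> int \<Rightarrow> real" where
  "flux_diff v r i = Aup (v (i + 1)) (r i) (r (i + 1)) - Aup (v i) (r (i - 1)) (r i)"

end

theory Submission
  imports Defs
begin

text \<open>
  One step of the scheme is an upwind transport of \<open>rho\<close> by the two interface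
  velocity fields \<open>U\<close> and \<open>w\<close>.  Writing the upwind flux through the positive and negative
  parts of the velocity shows that the new cell value is a combination of \<open>rho (i-1)\<close>,
  \<open>rho i\<close>, \<open>rho (i+1)\<close> with nonnegative weights as soon as the local CFL bound
  \<open>dt/dx * (|U i| + |U (i+1)| + |w i| + |w (i+1)|) \<le> 1\<close> holds; this gives \<open>rho \<ge> 0\<close>.
  For the upper bound, the pressure equation says exactly that the jump of \<open>w\<close> across a cell
  cancels the flux difference of \<open>U\<close>.  Consequently \<open>1 - rho\<close> evolves by a pure upwind
  transport by \<open>w\<close>, and the positivity argument applied to \<open>1 - rho\<close> gives \<open>rho \<le> 1\<close>.
\<close>

lemma Aup_split: "Aup u a b = max u 0 * a + min u 0 * b"
  by (simp add: Aup_def max_def min_def)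

text \<open>Upwind transport by two arbitrary velocity fields under the local CFL bound preserves
  nonnegativity: the new value is a nonnegative combination of the three neighbouring values.\<close>
lemma upwind_step_nonneg:
  fixes u v r :: "int \<Rightarrow> real" and l :: real
  assumes l_nonneg: "0 \<le> l"
    and cfl: "l * (\<bar>u i\<bar> + \<bar>u (i + 1)\<bar> + \<bar>v i\<bar> + \<bar>v (i + 1)\<bar>) \<le> 1"
    and r_nonneg: "0 \<le> r (i - 1)" "0 \<le> r i" "0 \<le> r (i + 1)"
  shows "0 \<le> r i - l * flux_diff u r i - l * flux_diff v r i"
proof -
  define c_left where "c_left = l * (max (u i) 0 + max (v i) 0)"
  define c_right where "c_right = l * (- min (u (i + 1)) 0 - min (v (i + 1)) 0)"
  define c_mid where
    "c_mid = 1 - l * (max (u (i + 1)) 0 - min (u i) 0 + max (v (i + 1)) 0 - min (v i) 0)"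
  have combination: "r i - l * flux_diff u r i - l * flux_diff v r i
      = c_mid * r i + c_left * r (i - 1) + c_right * r (i + 1)"
    unfolding c_mid_def c_left_def c_right_def flux_diff_def Aup_split
    by (simp add: algebra_simps)
  have "l * (max (u (i + 1)) 0 - min (u i) 0 + max (v (i + 1)) 0 - min (v i) 0)
      \<le> l * (\<bar>u i\<bar> + \<bar>u (i + 1)\<bar> + \<bar>v i\<bar> + \<bar>v (i + 1)\<bar>)"
    using l_nonneg by (intro mult_left_mono) (auto simp: max_def min_def)
  then have "0 \<le> c_mid" unfolding c_mid_def using cfl by linarith
  moreover have "0 \<le> c_left" "0 \<le> c_right"
    unfolding c_left_def c_right_def using l_nonneg by auto
  ultimately show ?thesis
    unfolding combination using r_nonneg by (simp add: add_nonneg_nonneg)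
qed

text \<open>Flux difference of the complementary density \<open>1 - r\<close>: the upwind flux of a constant
  is the velocity itself.\<close>
lemma flux_diff_complement:
  "flux_diff v (\<lambda>j. 1 - r j) i = (v (i + 1) - v i) - flux_diff v r i"
  by (simp add: flux_diff_def Aup_def algebra_simps)

lemma flux_diff_zero_velocity: "flux_diff (\<lambda>_. 0) r i = 0"
  by (simp add: flux_diff_def Aup_def)

text \<open>If the jump of \<open>v\<close> across cell \<open>i\<close> cancels the flux difference of \<open>u\<close> (the role of the
  pressure correction), then \<open>1 - r\<close> is transported by \<open>v\<close> alone, so the upper bound \<open>1\<close>
  is preserved.\<close>
lemma upwind_step_le_one:
  fixes u v r :: "int \<Rightarrow> real" and l :: real
  assumes l_nonneg: "0 \<le> l"
    and cfl: "l * (\<bar>u i\<bar> + \<bar>u (i + 1)\<bar> + \<bar>v i\<bar> + \<bar>v (i + 1)\<bar>) \<le> 1"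
    and r_le: "r (i - 1) \<le> 1" "r i \<le> 1" "r (i + 1) \<le> 1"
    and jump: "v (i + 1) - v i = - flux_diff u r i"
  shows "r i - l * flux_diff u r i - l * flux_diff v r i \<le> 1"
proof -
  let ?s = "\<lambda>j. 1 - r j"
  have "1 - (r i - l * flux_diff u r i - l * flux_diff v r i)
      = ?s i - l * flux_diff (\<lambda>_. 0) ?s i - l * flux_diff v ?s i"
    unfolding flux_diff_complement flux_diff_zero_velocity jump by (simp add: algebra_simps)
  moreover have "l * (\<bar>0::real\<bar> + \<bar>0::real\<bar> + \<bar>v i\<bar> + \<bar>v (i + 1)\<bar>)
      \<le> l * (\<bar>u i\<bar> + \<bar>u (i + 1)\<bar> + \<bar>v i\<bar> + \<bar>v (i + 1)\<bar>)"
    using l_nonneg by (intro mult_left_mono) auto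
  with cfl have "l * (\<bar>0::real\<bar> + \<bar>0::real\<bar> + \<bar>v i\<bar> + \<bar>v (i + 1)\<bar>) \<le> 1" by linarith
  then have "0 \<le> ?s i - l * flux_diff (\<lambda>_. 0) ?s i - l * flux_diff v ?s i"
    using l_nonneg r_le by (intro upwind_step_nonneg) auto
  ultimately show ?thesis by linarith
qed

lemma periodic_shift:
  assumes "periodic N f"
  shows "f (i + int N * k) = f i"
proof (induction k rule: int_induct[where k = 0])
  case base
  then show ?case by simp
next
  case (step1 k)
  have "f (i + int N * (k + 1)) = f ((i + int N * k) + int N)" by (simp add: algebra_simps)
  with assms step1.IH show ?case by (simp add: periodic_def)
next
  case (step2 k)
  have "f (i + int N * k) = f ((i + int N * (k - 1)) + int N)" by (simp add: algebra_simps)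
  with assms step2.IH show ?case by (simp add: periodic_def)
qed

lemma periodic_representative:
  assumes per: "periodic N f" and N_pos: "0 < N"
  obtains j where "j \<in> {1..int N}" "f i = f j"
proof
  let ?j = "(i - 1) mod int N + 1"
  have "f ?j = f (?j + int N * ((i - 1) div int N))"
    using periodic_shift[OF per] by presburger
  also have "?j + int N * ((i - 1) div int N) = i" by (simp add: algebra_simps)
  finally show "f i = f ?j" by simp
  have period_pos: "0 < int N" using N_pos by simp
  show "?j \<in> {1..int N}"
    using pos_mod_bound[OF period_pos, of "i - 1"] pos_mod_sign[OF period_pos, of "i - 1"] by auto
qed

lemma periodic_abs_le_Max:
  assumes "periodic N f" "0 < N"
  shows "\<bar>f i\<bar> \<le> Max ((\<lambda>j. \<bar>f j\<bar>) ` {1..int N})"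
proof -
  obtain j where "j \<in> {1..int N}" "f i = f j"
    using periodic_representative[OF assms] .
  then show ?thesis by (simp add: Max_ge)
qed

lemma periodic_gradient:
  assumes "periodic N p"
  shows "periodic N (\<lambda>i. - (p i - p (i - 1)) / dx)"
  using assms unfolding periodic_def by (metis diff_add_eq)

lemma pressure_jump:
  fixes p w :: "int \<Rightarrow> real" and dx F :: real
  assumes dx_pos: "0 < dx"
    and poisson: "(p (i + 1) - 2 * p i + p (i - 1)) / dx ^ 2 = F / dx"
    and w_grad: "\<And>j. w j = - (p j - p (j - 1)) / dx"
  shows "w (i + 1) - w i = - F"
proof -
  have "p (i + 1) - 2 * p i + p (i - 1) = F / dx * dx ^ 2"
    using poisson dx_pos by (simp add: divide_eq_eq)
  also have "\<dots> = dx * F"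
    using dx_pos by (simp add: power2_eq_square)
  finally have "p (i + 1) - 2 * p i + p (i - 1) = dx * F" .
  moreover have "w (i + 1) - w i = - (p (i + 1) - 2 * p i + p (i - 1)) / dx"
    using dx_pos by (simp add: w_grad field_simps)
  ultimately show ?thesis using dx_pos by simp
qed

lemma local_cfl:
  fixes u v :: "int \<Rightarrow> real"
  assumes dx_pos: "0 < dx" and dt_pos: "0 < dt"
    and u_le: "\<And>j. \<bar>u j\<bar> \<le> Mu" and v_le: "\<And>j. \<bar>v j\<bar> \<le> Mv"
    and cfl: "2 * dt * (Mu + Mv) < dx"
  shows "dt / dx * (\<bar>u i\<bar> + \<bar>u (i + 1)\<bar> + \<bar>v i\<bar> + \<bar>v (i + 1)\<bar>) \<le> 1"
proof -
  have "dt / dx * (\<bar>u i\<bar> + \<bar>u (i + 1)\<bar> + \<bar>v i\<bar> + \<bar>v (i + 1)\<bar>) \<le> dt / dx * (2 * (Mu + Mv))"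
    using dx_pos dt_pos u_le[of i] u_le[of "i + 1"] v_le[of i] v_le[of "i + 1"]
    by (intro mult_left_mono) auto
  also have "\<dots> \<le> 1" using cfl dx_pos by (simp add: field_simps)
  finally show ?thesis .
qed

theorem mainTheorem5:
  fixes N :: nat and dx dt :: real
    and rho U p :: "nat \<Rightarrow> int \<Rightarrow> real"
    and w :: "nat \<Rightarrow> int \<Rightarrow> real"
  assumes N_pos: "0 < N"
    and dx_pos: "0 < dx" and dt_pos: "0 < dt"
    and rho_per: "\<And>n. periodic N (rho n)"
    and U_per: "\<And>n. periodic N (U n)"
    and p_per: "\<And>n. periodic N (p n)"
    and pressure: "\<And>n i. (p n (i + 1) - 2 * p n i + p n (i - 1)) / dx ^ 2
                      = flux_diff (U n) (rho n) i / dx"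
    and w_def: "\<And>n i. w n i = - (p n i - p n (i - 1)) / dx"
    and update: "\<And>n i. rho (Suc n) i =
                   rho n i - dt / dx * flux_diff (U n) (rho n) i
                           - dt / dx * flux_diff (w n) (rho n) i"
    and CFL: "\<And>n. 2 * dt * (Max ((\<lambda>i. \<bar>U n i\<bar>) ` {1..int N})
                             + Max ((\<lambda>i. \<bar>w n i\<bar>) ` {1..int N})) < dx"
    and init: "\<And>i. i \<in> {1..int N} \<Longrightarrow> 0 \<le> rho 0 i \<and> rho 0 i \<le> 1"
  shows "\<forall>n. \<forall>i \<in> {1..int N}. 0 \<le> rho n i \<and> rho n i \<le> 1"
proof -
  have w_per: "periodic N (w n)" for n
  proof -
    have "w n = (\<lambda>i. - (p n i - p n (i - 1)) / dx)" by (rule ext) (rule w_def)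
    then show ?thesis using periodic_gradient[OF p_per[of n]] by simp
  qed
  have l_nonneg: "0 \<le> dt / dx" using dt_pos dx_pos by simp
  have cfl: "dt / dx * (\<bar>U n i\<bar> + \<bar>U n (i + 1)\<bar> + \<bar>w n i\<bar> + \<bar>w n (i + 1)\<bar>) \<le> 1" for n i
    using periodic_abs_le_Max[OF U_per N_pos] periodic_abs_le_Max[OF w_per N_pos]
    by (intro local_cfl[OF dx_pos dt_pos _ _ CFL[of n]])
  have jump: "w n (i + 1) - w n i = - flux_diff (U n) (rho n) i" for n i
    using pressure_jump[OF dx_pos pressure w_def] .
  have "0 \<le> rho n i \<and> rho n i \<le> 1" for n i
  proof (induction n arbitrary: i)
    case 0
    obtain j where "j \<in> {1..int N}" "rho 0 i = rho 0 j"
      using periodic_representative[OF rho_per N_pos] .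
    then show ?case using init by simp
  next
    case (Suc n)
    then show ?case
      unfolding update
      using upwind_step_nonneg[OF l_nonneg cfl[of n i]]
        upwind_step_le_one[OF l_nonneg cfl[of n i] _ _ _ jump[of n i]]
      by blast
  qed
  then show ?thesis by blast
qed

end
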